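(* For every $z_j\in Z_\theta$ and every $t=0,1,\dots,T-2$, $\bar\omega_t(z_j)\le U^\omega_t(z_j)\le\bar U^\omega_t(\theta)$, where, with $\mu_t(0)=z_j$ and $\mu_t(i)=\max(\mu_t(i-1),S^U_{t+i-1})+\theta$ for $i=1,\dots,T-2-t$, $$U^\omega_t(z_j)=\theta\sum_{i=0}^{T-2-t}\alpha^i\gamma_{t+i}+\theta\sum_{i=0}^{T-2-t}\sum_{n=1}^{T-1-t-i}\alpha^{n+i}\gamma_{t+i+n}\Big[\prod_{m=0}^{n-1}F_{t+i+m}\big(S^U_{t+i}+(m+1)\theta-s_{t+i+m+1}\big)+\prod_{m=0}^{n-1}F_{t+i+m}\big(\max(\mu_t(i),S^U_{t+i})+(m+1)\theta-s_{t+i+m+1}\big)\Big],$$ $$\bar U^\omega_t(\theta)=\theta\sum_{i=0}^{T-2-t}\alpha^i\gamma_{t+i}+2\theta\sum_{i=0}^{T-2-t}\sum_{n=1}^{T-1-t-i}\alpha^{n+i}\gamma_{t+i+n}.$$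
   Context: Model. Fix an integer horizon $T\ge 2$, a discount factor $\alpha\in(0,1]$, and for $t=0,\dots,T-1$: unit ordering costs $c_t\in\mathbb R$, a salvage coefficient $c_T\in\mathbb R$, setup costs $K_t\ge 0$, functions $G_t:\mathbb R\to\mathbb R$, and independent nonnegative random demands $D_0,\dots,D_{T-1}$ with right-continuous distribution functions $F_t$ and finite means; all expectations appearing are assumed finite. Put $C_t(y)=(c_t-\alpha c_{t+1})y+G_t(y)+\alpha c_{t+1}E[D_t]$. Standing assumptions: (i) each $C_t$ is convex with $C_t(y)\to+\infty$ as $|y|\to\infty$; (ii) $K_t\ge \alpha K_{t+1}$ for $t=0,\dots,T-2$; (iii) there are constants $\gamma_t\ge 0$ with $|C_t(x)-C_t(y)|\le\gamma_t|x-y|$ for all $x,y$. Grid construction. Fix $\theta>0$, $z_m=m\theta$, $Z_\theta=\{z_m:m\in\mathbb Z\}$, $f_t(n)=F_t(z_{n+1})-F_t(z_n)$ ($n\ge -1$). $C^m_t=\min\{y: C_t(y)=\min_x C_t(x)\}$; with $z_{n_0}<C^m_t\le z_{n_0+1}$, $S^U_t=\min\{z_m\in Z_\theta: z_m\ge C^m_t,\ C_t(z_m)>C_t(z_{n_0})+K_t\}$. $s_{T-1}$ is a point with $s_{T-1}\le C^m_{T-1}$, $C_{T-1}(s_{T-1})=C_{T-1}(C^m_{T-1})+K_{T-1}$; $\bar I_{T-1}=s_{T-1}$. For $t=T-2,\dots,0$: $I_t=\max\{z_m\in Z_\theta: z_m<\min(\bar I_{t+1}-\theta,C^m_t)\}$,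 $\bar I_t=\max\{z_m\in Z_\theta: z_m\le I_t,\ C_t(z_m)>C_t(I_t)+K_t\}+\theta$. $H_{T-1}=C_{T-1}$, $S_{T-1}=C^m_{T-1}$; $V_t(y)=H_t(S_t)+K_t$ for $y<s_t$, $V_t(y)=H_t(y)$ for $y\ge s_t$. For $t=T-2,\dots,0$: $H_t(y)=C_t(y)+\alpha\sum_{n=-1}^\infty V_{t+1}(y-z_n)f_t(n)$; $S_t=\max\{z_m\in Z_\theta: I_t\le z_m\le S^U_t,\ H_t(z_m)=\min\{H_t(z_n):z_n\in Z_\theta, I_t\le z_n\le S^U_t\}\}$; $s_t=S_t$ if $K_t=0$, else $s_t=\min\{z_m\in Z_\theta:\bar I_t\le z_m\le S_t,\ H_t(z_m)\le H_t(S_t)+K_t\}$. Estimate functions. $\psi_{T-1}(x,y)=\bar\psi_{T-1}(x,y)=\gamma_{T-1}x$; $\varphi_{T-1}(x,y)=\bar\varphi_{T-1}(x,y)=0$ if $y<s_{T-1}$ and $=\gamma_{T-1}x$ if $y\ge s_{T-1}$. For $t=0,\dots,T-2$, with $n$ the integer such that $z_{n-1}\le y-s_{t+1}<z_n$: $\psi_t(x,y)=\gamma_tx$ if $y<s_{t+1}-\theta$, else $\psi_t(x,y)=\gamma_tx+\alpha\sum_{m=-1}^{n-1}\varphi_{t+1}(x,y-z_m)f_t(m)$; $\varphi_t(x,y)=0$ if $y<s_t$, $=\psi_t(y-s_t,y)$ if $y\ge s_t$ and $y-x<s_t$, $=\psi_t(x,y)$ if $y\ge s_t$ and $y-x\ge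 s_t$. Likewise $\bar\psi_t(x,y)=\gamma_tx$ if $y<s_{t+1}-\theta$, else $\bar\psi_t(x,y)=\gamma_tx+\alpha\sum_{m=-1}^{n-1}\bar\varphi_{t+1}(x,y-z_m)f_t(m)$; $\bar\varphi_t(x,y)=0$ if $y<s_t$, $=\bar\psi_t(y-s_t+\theta,y)$ if $y\ge s_t$ and $y-x<s_t$, $=\bar\psi_t(x,y)$ if $y\ge s_t$ and $y-x\ge s_t$. Error-bound functions. $\omega_{T-1}\equiv\bar\omega_{T-1}\equiv 0$, $\eta_{T-1}=0$. For $t=T-2,\dots,0$: $\omega_t(x)=\psi_t(\theta,x)-\gamma_t\theta+\alpha\sum_{n=-1}^\infty\bar\omega_{t+1}(x-z_n)f_t(n)$; $\eta_t=\bar\psi_t(\theta,S^U_t)+\omega_t(S^U_t)$; $\bar\omega_t(x)=\eta_t$ if $x\le S^U_t$ and $\bar\omega_t(x)=\max(\eta_t,\omega_t(x))$ if $x>S^U_t$. *)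

theory Defs
  imports "HOL-Probability.Probability"
begin

text \<open>Data of the finite-horizon inventory model (horizon T, discount alpha,
  unit costs c_0..c_T, setup costs K_t, functions G_t, demand distributions D_t
  (as probability measures on the reals), Lipschitz constants gamma_t, grid step theta).\<close>

record inv_data =
  T     :: nat
  alpha :: real
  c     :: "nat \<Rightarrow> real"
  K     :: "nat \<Rightarrow> real"
  G     :: "nat \<Rightarrow> real \<Rightarrow> real"
  dem   :: "nat \<Rightarrow> real measure"
  gam   :: "nat \<Rightarrow> real"
  theta :: real

definition F :: "inv_data \<Rightarrow> nat \<Rightarrow> real \<Rightarrow> real" where
  "F P t x = measure (dem P t) {..x}"

definition ED :: "inv_data \<Rightarrow> nat \<Rightarrow> real" where
  "ED P t = integral\<^sup>L (dem P t) (\<lambda>x. x)"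

definition C :: "inv_data \<Rightarrow> nat \<Rightarrow> real \<Rightarrow> real" where
  "C P t y = (c P t - alpha P * c P (Suc t)) * y + G P t y + alpha P * c P (Suc t) * ED P t"

definition z :: "inv_data \<Rightarrow> int \<Rightarrow> real" where
  "z P m = real_of_int m * theta P"

definition f :: "inv_data \<Rightarrow> nat \<Rightarrow> int \<Rightarrow> real" where
  "f P t n = F P t (z P (n + 1)) - F P t (z P n)"

definition Cm :: "inv_data \<Rightarrow> nat \<Rightarrow> real" where
  "Cm P t = (LEAST y. \<forall>x. C P t y \<le> C P t x)"

definition n0 :: "inv_data \<Rightarrow> nat \<Rightarrow> int" where
  "n0 P t = (THE n. z P n < Cm P t \<and> Cm P t \<le> z P (n + 1))"

definition SU :: "inv_data \<Rightarrow> nat \<Rightarrow> real" where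
  "SU P t = z P (LEAST m. z P m \<ge> Cm P t \<and> C P t (z P m) > C P t (z P (n0 P t)) + K P t)"

definition sT1 :: "inv_data \<Rightarrow> real" where
  "sT1 P = (THE s. s \<le> Cm P (T P - 1) \<and>
     C P (T P - 1) s = C P (T P - 1) (Cm P (T P - 1)) + K P (T P - 1))"

definition Istep :: "inv_data \<Rightarrow> nat \<Rightarrow> real \<Rightarrow> real" where
  "Istep P t ib = z P (GREATEST m. z P m < min (ib - theta P) (Cm P t))"

function Ibar :: "inv_data \<Rightarrow> nat \<Rightarrow> real" where
  "Ibar P t = (if T P - 1 \<le> t then sT1 P
     else (let I = Istep P t (Ibar P (Suc t))
           in z P (GREATEST m. z P m \<le> I \<and> C P t (z P m) > C P t I + K P t) + theta P))"
  by pat_completeness auto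
termination by (relation "Wellfounded.measure (\<lambda>(P, t). T P - t)") auto

definition Ival :: "inv_data \<Rightarrow> nat \<Rightarrow> real" where
  "Ival P t = Istep P t (Ibar P (Suc t))"

text \<open>Backward recursion returning (H_t, S_t, s_t); V_{t+1} is built from the triple at t+1.
  Sums over n \<ge> -1 are written with n = int k - 1, k a natural number.\<close>
function HSs :: "inv_data \<Rightarrow> nat \<Rightarrow> (real \<Rightarrow> real) \<times> real \<times> real" where
  "HSs P t = (if T P - 1 \<le> t then (C P (T P - 1), Cm P (T P - 1), sT1 P)
     else (let R = HSs P (Suc t); H' = fst R; S' = fst (snd R); s' = snd (snd R);
       V = (\<lambda>y. if y < s' then H' S' + K P (Suc t) else H' y);
       H = (\<lambda>y. C P t y + alpha P * (\<Sum>k. V (y - z P (int k - 1)) * f P t (int k - 1)));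
       S = z P (GREATEST m. Ival P t \<le> z P m \<and> z P m \<le> SU P t \<and>
              (\<forall>n. Ival P t \<le> z P n \<and> z P n \<le> SU P t \<longrightarrow> H (z P m) \<le> H (z P n)));
       s = (if K P t = 0 then S
            else z P (LEAST m. Ibar P t \<le> z P m \<and> z P m \<le> S \<and> H (z P m) \<le> H S + K P t))
     in (H, S, s)))"
  by pat_completeness auto
termination by (relation "Wellfounded.measure (\<lambda>(P, t). T P - t)") auto

definition H :: "inv_data \<Rightarrow> nat \<Rightarrow> real \<Rightarrow> real" where
  "H P t = fst (HSs P t)"

definition S :: "inv_data \<Rightarrow> nat \<Rightarrow> real" where
  "S P t = fst (snd (HSs P t))"

definition s :: "inv_data \<Rightarrow> nat \<Rightarrow> real" where
  "s P t = snd (snd (HSs P t))"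

definition V :: "inv_data \<Rightarrow> nat \<Rightarrow> real \<Rightarrow> real" where
  "V P t y = (if y < s P t then H P t (S P t) + K P t else H P t y)"

definition nidx :: "inv_data \<Rightarrow> nat \<Rightarrow> real \<Rightarrow> int" where
  "nidx P t y = (THE n. z P (n - 1) \<le> y - s P (Suc t) \<and> y - s P (Suc t) < z P n)"

definition psi_step :: "inv_data \<Rightarrow> nat \<Rightarrow> (real \<Rightarrow> real \<Rightarrow> real) \<Rightarrow> real \<Rightarrow> real \<Rightarrow> real" where
  "psi_step P t ph x y = (if y < s P (Suc t) - theta P then gam P t * x
     else gam P t * x + alpha P * (\<Sum>m\<in>{-1..nidx P t y - 1}. ph x (y - z P m) * f P t m))"

text \<open>phiG P 0 = phi, phiG P theta = phibar (they differ only in the shift e).\<close>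
function phiG :: "inv_data \<Rightarrow> real \<Rightarrow> nat \<Rightarrow> real \<Rightarrow> real \<Rightarrow> real" where
  "phiG P e t = (if T P - 1 \<le> t then
       (\<lambda>x y. if y < s P (T P - 1) then 0 else gam P (T P - 1) * x)
     else (\<lambda>x y. if y < s P t then 0
       else if y - x < s P t then psi_step P t (phiG P e (Suc t)) (y - s P t + e) y
       else psi_step P t (phiG P e (Suc t)) x y))"
  by pat_completeness auto
termination by (relation "Wellfounded.measure (\<lambda>(P, e, t). T P - t)") auto

definition phi :: "inv_data \<Rightarrow> nat \<Rightarrow> real \<Rightarrow> real \<Rightarrow> real" where
  "phi P t = phiG P 0 t"

definition phibar :: "inv_data \<Rightarrow> nat \<Rightarrow> real \<Rightarrow> real \<Rightarrow> real" where
  "phibar P t = phiG P (theta P) t"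

definition psi :: "inv_data \<Rightarrow> nat \<Rightarrow> real \<Rightarrow> real \<Rightarrow> real" where
  "psi P t x y = (if T P - 1 \<le> t then gam P t * x else psi_step P t (phi P (Suc t)) x y)"

definition psibar :: "inv_data \<Rightarrow> nat \<Rightarrow> real \<Rightarrow> real \<Rightarrow> real" where
  "psibar P t x y = (if T P - 1 \<le> t then gam P t * x else psi_step P t (phibar P (Suc t)) x y)"

definition omega_step :: "inv_data \<Rightarrow> nat \<Rightarrow> (real \<Rightarrow> real) \<Rightarrow> real \<Rightarrow> real" where
  "omega_step P t ob x = psi P t (theta P) x - gam P t * theta P
     + alpha P * (\<Sum>k. ob (x - z P (int k - 1)) * f P t (int k - 1))"

function omegabar :: "inv_data \<Rightarrow> nat \<Rightarrow> real \<Rightarrow> real" where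
  "omegabar P t = (if T P - 1 \<le> t then (\<lambda>x. 0)
     else (let om = omega_step P t (omegabar P (Suc t));
               eta = psibar P t (theta P) (SU P t) + om (SU P t)
           in (\<lambda>x. if x \<le> SU P t then eta else max eta (om x))))"
  by pat_completeness auto
termination by (relation "Wellfounded.measure (\<lambda>(P, t). T P - t)") auto

definition omega :: "inv_data \<Rightarrow> nat \<Rightarrow> real \<Rightarrow> real" where
  "omega P t = (if T P - 1 \<le> t then (\<lambda>x. 0) else omega_step P t (omegabar P (Suc t)))"

definition eta :: "inv_data \<Rightarrow> nat \<Rightarrow> real" where
  "eta P t = (if T P - 1 \<le> t then 0 else psibar P t (theta P) (SU P t) + omega P t (SU P t))"

primrec mu :: "inv_data \<Rightarrow> nat \<Rightarrow> int \<Rightarrow> nat \<Rightarrow> real" where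
  "mu P t j 0 = z P j"
| "mu P t j (Suc i) = max (mu P t j i) (SU P (t + i)) + theta P"

definition U_omega :: "inv_data \<Rightarrow> nat \<Rightarrow> int \<Rightarrow> real" where
  "U_omega P t j =
     theta P * (\<Sum>i=0..T P - 2 - t. alpha P ^ i * gam P (t + i))
   + theta P * (\<Sum>i=0..T P - 2 - t. \<Sum>n=1..T P - 1 - t - i.
        alpha P ^ (n + i) * gam P (t + i + n) *
        ((\<Prod>m=0..n - 1. F P (t + i + m) (SU P (t + i) + real (m + 1) * theta P - s P (t + i + m + 1)))
       + (\<Prod>m=0..n - 1. F P (t + i + m)
            (max (mu P t j i) (SU P (t + i)) + real (m + 1) * theta P - s P (t + i + m + 1)))))"

definition Ubar_omega :: "inv_data \<Rightarrow> nat \<Rightarrow> real" where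
  "Ubar_omega P t =
     theta P * (\<Sum>i=0..T P - 2 - t. alpha P ^ i * gam P (t + i))
   + 2 * theta P * (\<Sum>i=0..T P - 2 - t. \<Sum>n=1..T P - 1 - t - i.
        alpha P ^ (n + i) * gam P (t + i + n))"

definition standing_assms :: "inv_data \<Rightarrow> bool" where
  "standing_assms P \<longleftrightarrow>
     T P \<ge> 2 \<and> 0 < alpha P \<and> alpha P \<le> 1 \<and> 0 < theta P \<and>
     (\<forall>t < T P. prob_space (dem P t) \<and> sets (dem P t) = sets borel \<and>
        (AE x in dem P t. 0 \<le> x) \<and> integrable (dem P t) (\<lambda>x. x)) \<and>
     (\<forall>t < T P. K P t \<ge> 0) \<and>
     (\<forall>t < T P. convex_on UNIV (C P t) \<and> filterlim (C P t) at_top at_infinity) \<and>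
     (\<forall>t. t + 1 < T P \<longrightarrow> K P t \<ge> alpha P * K P (Suc t)) \<and>
     (\<forall>t < T P. gam P t \<ge> 0 \<and> (\<forall>x y. \<bar>C P t x - C P t y\<bar> \<le> gam P t * \<bar>x - y\<bar>))"

end

theory Submission
  imports Defs
begin

text \<open>
  Put B_t(y) = \<theta> \<Sum>_n \<alpha>^n \<gamma>_(t+n) \<Prod>_(m<n) F_(t+m)(y + (m+1)\<theta> - s_(t+m+1)), so that
  B_t(y) = \<alpha> F_t(y + \<theta> - s_(t+1)) (\<gamma>_(t+1) \<theta> + B_(t+1)(y + \<theta>)).
  The sum defining \<psi>_t(\<theta>, y) only charges demands up to y + \<theta> - s_(t+1) and evaluates
  \<phi>_(t+1)(\<theta>, -) at points below y + \<theta>; as B_(t+1) is monotone, backward induction shows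
  that on the grid \<phi>_t(\<theta>, -) and \<phi>bar_t(\<theta>, -) lie in [0, \<gamma>_t \<theta> + B_t], while
  \<psi>_t(\<theta>, -) and \<psi>bar_t(\<theta>, -) lie in [\<gamma>_t \<theta>, \<gamma>_t \<theta> + B_t].
  The series in \<omega>_t(x) averages \<omega>bar_(t+1) over points below x + \<theta>, and \<omega>bar_t(x) only
  involves the point S^U_t and, when x > S^U_t, the point x itself. Hence \<omega>bar_t \<le> U_t for the
  monotone recursion
    U_t(y) = \<gamma>_t \<theta> + B_t(S^U_t) + B_t(max y S^U_t) + \<alpha> U_(t+1)(max y S^U_t + \<theta>).
  Unrolling U_t yields U^\<omega>_t, and bounding every product of probabilities by 1 yields Ubar^\<omega>_t.
\<close>

declare HSs.simps [simp del] phiG.simps [simp del] omegabar.simps [simp del]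

section \<open>Grid and demand distributions\<close>

lemma z_diff: "z P a - z P b = z P (a - b)"
  by (simp add: z_def algebra_simps)

lemma z_minus_one: "z P (n - 1) = z P n - theta P"
  by (simp add: z_def algebra_simps)

lemma grid_cell_ex1:
  assumes "0 < theta P"
  shows "\<exists>!n. z P (n - 1) \<le> v \<and> v < z P n"
proof
  let ?n = "\<lfloor>v / theta P\<rfloor> + 1"
  show "z P (?n - 1) \<le> v \<and> v < z P ?n"
    using floor_divide_lower[OF assms, of v] floor_divide_upper[OF assms, of v]
    by (simp add: z_def)
  fix m assume "z P (m - 1) \<le> v \<and> v < z P m"
  then have "real_of_int (m - 1) \<le> v / theta P" "v / theta P < real_of_int (m - 1) + 1"
    using assms by (simp_all add: z_def pos_le_divide_eq pos_divide_less_eq)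
  then have "\<lfloor>v / theta P\<rfloor> = m - 1" by (rule floor_unique)
  then show "m = ?n" by simp
qed

lemma grid_eq_if_close:
  assumes "0 < theta P" "z P b \<le> z P a" "z P a < z P b + theta P"
  shows "a = b"
proof -
  have "real_of_int b * theta P \<le> real_of_int a * theta P"
    "real_of_int a * theta P < (real_of_int b + 1) * theta P"
    using assms(2,3) by (simp_all add: z_def algebra_simps)
  then have "real_of_int b \<le> real_of_int a" "real_of_int a < real_of_int b + 1"
    using assms(1) by (simp_all add: mult_le_cancel_right mult_less_cancel_right)
  then show ?thesis by linarith
qed

lemma s_in_grid:
  assumes "t < T P - 1"
  shows "s P t \<in> range (z P)"
proof -
  have nl: "\<not> T P - 1 \<le> t" using assms by simp
  show ?thesis
    unfolding s_def HSs.simps[of P t] if_not_P[OF nl] Let_def snd_conv by (split if_split) (blast intro: rangeI)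
qed

lemma F_nonneg: "0 \<le> F P t x"
  by (simp add: F_def)

lemma sum_f_telescope:
  "n \<ge> -1 \<Longrightarrow> (\<Sum>m\<in>{-1..n-1}. f P t m) = F P t (z P n) - F P t (z P (-1))"
proof (induction n rule: int_ge_induct)
  case base
  then show ?case by simp
next
  case (step n)
  then have "{-1..n + 1 - 1} = insert n {-1..n-1}" by auto
  with step show ?case by (simp add: f_def)
qed

lemma sum_f_le_F: "(\<Sum>m\<in>{-1..n-1}. f P t m) \<le> F P t (z P n)"
  using sum_f_telescope[of n P t] F_nonneg[of P t] by (cases "n \<ge> -1") auto

lemma sum_f_telescope_nat:
  "(\<Sum>k<N. f P t (int k - 1)) = F P t (z P (int N - 1)) - F P t (z P (-1))"
  by (induction N) (simp_all add: f_def)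

lemma suminf_weighted_bounds:
  fixes g p :: "nat \<Rightarrow> real"
  assumes p_nonneg: "\<And>k. 0 \<le> p k" and p_partial: "\<And>n. (\<Sum>k<n. p k) \<le> 1"
    and g_bounds: "\<And>k. 0 \<le> g k \<and> g k \<le> M"
  shows "0 \<le> (\<Sum>k. g k * p k) \<and> (\<Sum>k. g k * p k) \<le> M"
proof
  have M: "0 \<le> M" using g_bounds[of 0] by linarith
  have sp: "summable p"
    using p_nonneg p_partial by (rule summableI_nonneg_bounded)
  have sMp: "summable (\<lambda>k. M * p k)" using sp by (rule summable_mult)
  have sgp: "summable (\<lambda>k. g k * p k)"
    by (rule summable_comparison_test'[OF sMp, where N=0])
      (use g_bounds p_nonneg in \<open>simp add: abs_mult mult_right_mono\<close>)
  show "0 \<le> (\<Sum>k. g k * p k)"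
    using sgp g_bounds p_nonneg by (simp add: suminf_nonneg)
  have "(\<Sum>k. g k * p k) \<le> (\<Sum>k. M * p k)"
    using sgp sMp g_bounds p_nonneg by (intro suminf_le) (simp_all add: mult_right_mono)
  also have "\<dots> = M * (\<Sum>k. p k)" using suminf_mult[OF sp] by simp
  also have "\<dots> \<le> M"
    using suminf_le_const[OF sp p_partial] M by (simp add: mult_left_le)
  finally show "(\<Sum>k. g k * p k) \<le> M" .
qed

section \<open>The bounding functions\<close>

definition cdf_prod :: "inv_data \<Rightarrow> nat \<Rightarrow> real \<Rightarrow> nat \<Rightarrow> real" where
  "cdf_prod P t y n = (\<Prod>m<n. F P (t + m) (y + real (m + 1) * theta P - s P (t + m + 1)))"

definition B_phi :: "inv_data \<Rightarrow> nat \<Rightarrow> real \<Rightarrow> real" where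
  "B_phi P t y = theta P * (\<Sum>n=1..T P - 1 - t. alpha P ^ n * gam P (t + n) * cdf_prod P t y n)"

lemma cdf_prod_Suc:
  "cdf_prod P t y (Suc n) = F P t (y + theta P - s P (Suc t)) * cdf_prod P (Suc t) (y + theta P) n"
  unfolding cdf_prod_def prod.lessThan_Suc_shift by (simp add: algebra_simps)

lemma B_phi_Suc:
  assumes "Suc t < T P"
  shows "B_phi P t y =
    alpha P * F P t (y + theta P - s P (Suc t)) * (gam P (Suc t) * theta P + B_phi P (Suc t) (y + theta P))"
proof -
  define N where "N = T P - 1 - Suc t"
  define h where "h n = alpha P ^ n * gam P (Suc t + n) * cdf_prod P (Suc t) (y + theta P) n" for n
  have "T P - 1 - t = Suc N" using assms by (simp add: N_def)
  then have "B_phi P t y =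
      theta P * (\<Sum>n=Suc 0..Suc N. alpha P ^ n * gam P (t + n) * cdf_prod P t y n)"
    by (simp add: B_phi_def)
  also have "\<dots> = theta P * (\<Sum>n=0..N. alpha P ^ Suc n * gam P (t + Suc n) * cdf_prod P t y (Suc n))"
    by (simp only: sum.atLeast_Suc_atMost_Suc_shift comp_def)
  also have "\<dots> = theta P * (\<Sum>n=0..N. alpha P * F P t (y + theta P - s P (Suc t)) * h n)"
    by (simp add: h_def cdf_prod_Suc mult_ac)
  also have "\<dots> = alpha P * F P t (y + theta P - s P (Suc t)) * (theta P * (h 0 + (\<Sum>n=1..N. h n)))"
    by (simp add: sum.atLeast_Suc_atMost sum_distrib_left sum_distrib_right distrib_left mult_ac)
  also have "theta P * (h 0 + (\<Sum>n=1..N. h n)) = gam P (Suc t) * theta P + B_phi P (Suc t) (y + theta P)"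
    by (simp add: h_def B_phi_def N_def cdf_prod_def algebra_simps)
  finally show ?thesis .
qed

function U_rec :: "inv_data \<Rightarrow> nat \<Rightarrow> real \<Rightarrow> real" where
  "U_rec P t y = (if T P - 1 \<le> t then 0
     else gam P t * theta P + B_phi P t (SU P t) + B_phi P t (max y (SU P t))
       + alpha P * U_rec P (Suc t) (max y (SU P t) + theta P))"
  by pat_completeness auto
termination by (relation "Wellfounded.measure (\<lambda>(P, t, y). T P - t)") auto

declare U_rec.simps [simp del]

primrec mu_at :: "inv_data \<Rightarrow> nat \<Rightarrow> real \<Rightarrow> nat \<Rightarrow> real" where
  "mu_at P t y 0 = y"
| "mu_at P t y (Suc i) = max (mu_at P t y i) (SU P (t + i)) + theta P"

lemma mu_at_Suc_shift: "mu_at P t y (Suc i) = mu_at P (Suc t) (max y (SU P t) + theta P) i"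
  by (induction i) simp_all

lemma mu_eq_mu_at: "mu P t j i = mu_at P t (z P j) i"
  by (induction i) simp_all

definition U_term :: "inv_data \<Rightarrow> nat \<Rightarrow> real \<Rightarrow> nat \<Rightarrow> real" where
  "U_term P t y i = alpha P ^ i * (gam P (t + i) * theta P + B_phi P (t + i) (SU P (t + i))
     + B_phi P (t + i) (max (mu_at P t y i) (SU P (t + i))))"

lemma U_rec_unfold:
  assumes "T P - 2 - t = d" "t \<le> T P - 2" "2 \<le> T P"
  shows "U_rec P t y = (\<Sum>i=0..d. U_term P t y i)"
  using assms
proof (induction d arbitrary: t y)
  case 0
  then have "U_rec P (Suc t) y' = 0" for y' by (subst U_rec.simps) simp
  with 0 show ?case by (subst U_rec.simps) (simp add: U_term_def)
next
  case (Suc d)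
  have shift: "alpha P * U_term P (Suc t) (max y (SU P t) + theta P) i = U_term P t y (Suc i)" for i
    unfolding U_term_def by (simp add: mu_at_Suc_shift del: mu_at.simps(2))
  have "U_rec P t y = U_term P t y 0 + alpha P * U_rec P (Suc t) (max y (SU P t) + theta P)"
    using Suc.prems by (subst U_rec.simps) (simp add: U_term_def)
  also have "\<dots> = U_term P t y 0 + (\<Sum>i=0..d. U_term P t y (Suc i))"
    using Suc by (simp add: sum_distrib_left shift)
  also have "\<dots> = (\<Sum>i=0..Suc d. U_term P t y i)"
    by (simp only: sum.atLeast0_atMost_Suc_shift comp_def)
  finally show ?case .
qed

lemma U_omega_eq_cdf_prod:
  "U_omega P t j = theta P * (\<Sum>i=0..T P - 2 - t. alpha P ^ i * gam P (t + i))
   + theta P * (\<Sum>i=0..T P - 2 - t. \<Sum>n=1..T P - 1 - t - i.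
        alpha P ^ (n + i) * gam P (t + i + n) *
        (cdf_prod P (t + i) (SU P (t + i)) n + cdf_prod P (t + i) (max (mu P t j i) (SU P (t + i))) n))"
proof -
  have "(\<Prod>m=0..n - 1. F P (t + i + m) (y + real (m + 1) * theta P - s P (t + i + m + 1)))
      = cdf_prod P (t + i) y n" if "n \<ge> 1" for i n y
    using that by (simp add: cdf_prod_def atLeast0AtMost lessThan_Suc_atMost[symmetric] add.assoc)
  then show ?thesis
    unfolding U_omega_def by (intro arg_cong2[where f="(+)"] refl arg_cong[where f="(*) _"]
        sum.cong) auto
qed

lemma U_omega_eq_sum_U_term: "U_omega P t j = (\<Sum>i=0..T P - 2 - t. U_term P t (z P j) i)"
proof -
  have "U_term P t (z P j) i = theta P * (alpha P ^ i * gam P (t + i))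
      + theta P * (\<Sum>n=1..T P - 1 - t - i. alpha P ^ (n + i) * gam P (t + i + n) *
          (cdf_prod P (t + i) (SU P (t + i)) n
           + cdf_prod P (t + i) (max (mu P t j i) (SU P (t + i))) n))" for i
    by (simp add: U_term_def B_phi_def mu_eq_mu_at sum_distrib_left sum.distrib[symmetric]
        power_add algebra_simps)
  then show ?thesis
    unfolding U_omega_eq_cdf_prod by (simp add: sum.distrib sum_distrib_left)
qed

lemma phiG_zero: "phiG P e t 0 y = 0"
proof (induction P e t arbitrary: y rule: phiG.induct)
  case (1 P e t)
  show ?case
  proof (cases "T P - 1 \<le> t")
    case True
    then show ?thesis by (subst phiG.simps) simp
  next
    case False
    then have "phiG P e (Suc t) 0 y' = 0" for y' using 1 by blast
    with False show ?thesis by (subst phiG.simps) (simp add: psi_step_def)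
  qed
qed

section \<open>Bounds under the standing assumptions\<close>

context
  fixes P :: inv_data
  assumes sa: "standing_assms P"
begin

lemma theta_pos: "0 < theta P"
  using sa by (simp add: standing_assms_def)

lemma alpha_pos: "0 < alpha P"
  using sa by (simp add: standing_assms_def)

lemma T_ge_2: "2 \<le> T P"
  using sa by (simp add: standing_assms_def)

lemma gam_nonneg: "t < T P \<Longrightarrow> 0 \<le> gam P t"
  using sa by (simp add: standing_assms_def)

lemma F_le_1: "t < T P \<Longrightarrow> F P t x \<le> 1"
  using sa unfolding F_def standing_assms_def by (simp add: prob_space.prob_le_1)

lemma F_mono:
  assumes "t < T P" "x \<le> y"
  shows "F P t x \<le> F P t y"
proof -
  have "prob_space (dem P t)" "sets (dem P t) = sets borel"
    using sa assms(1) by (simp_all add: standing_assms_def)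
  then show ?thesis
    unfolding F_def using assms(2)
    by (intro finite_measure.finite_measure_mono) (auto simp: prob_space.finite_measure)
qed

lemma z_mono: "a \<le> b \<Longrightarrow> z P a \<le> z P b"
  using theta_pos by (simp add: z_def mult_right_mono)

lemma f_nonneg: "t < T P \<Longrightarrow> 0 \<le> f P t n"
  unfolding f_def using F_mono z_mono[of n "n + 1"] by simp

lemma suminf_f_bounds:
  assumes "t < T P" "\<And>k. 0 \<le> g k \<and> g k \<le> M"
  shows "0 \<le> (\<Sum>k. g k * f P t (int k - 1)) \<and> (\<Sum>k. g k * f P t (int k - 1)) \<le> M"
proof (rule suminf_weighted_bounds[OF _ _ assms(2)])
  show "0 \<le> f P t (int k - 1)" for k using f_nonneg[OF assms(1)] .
  show "(\<Sum>k<n. f P t (int k - 1)) \<le> 1" for n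
    unfolding sum_f_telescope_nat using F_le_1[OF assms(1)] F_nonneg[of P t] by (smt (verit))
qed

lemma nidx_grid_cell: "z P (nidx P t y - 1) \<le> y - s P (Suc t) \<and> y - s P (Suc t) < z P (nidx P t y)"
  unfolding nidx_def by (rule theI'[OF grid_cell_ex1[OF theta_pos]])

lemma cdf_prod_bounds:
  assumes "t + n \<le> T P"
  shows "0 \<le> cdf_prod P t y n \<and> cdf_prod P t y n \<le> 1"
  unfolding cdf_prod_def using assms F_le_1 F_nonneg
  by (auto intro!: prod_nonneg prod_le_1)

lemma cdf_prod_mono:
  assumes "t + n \<le> T P" "x \<le> y"
  shows "cdf_prod P t x n \<le> cdf_prod P t y n"
  unfolding cdf_prod_def using assms F_nonneg F_mono by (auto intro!: prod_mono)

lemma B_phi_nonneg: "0 \<le> B_phi P t y"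
  unfolding B_phi_def using theta_pos alpha_pos gam_nonneg cdf_prod_bounds
  by (auto intro!: mult_nonneg_nonneg sum_nonneg)

lemma B_phi_mono: "x \<le> y \<Longrightarrow> B_phi P t x \<le> B_phi P t y"
  unfolding B_phi_def using theta_pos alpha_pos gam_nonneg cdf_prod_mono
  by (auto intro!: mult_left_mono sum_mono)

lemma U_rec_mono: "t \<le> T P - 1 \<Longrightarrow> x \<le> y \<Longrightarrow> U_rec P t x \<le> U_rec P t y"
proof (induction t arbitrary: x y rule: inc_induct)
  case base
  then show ?case by (simp add: U_rec.simps)
next
  case (step t)
  have "max x (SU P t) \<le> max y (SU P t)" using step.prems by simp
  then have "B_phi P t (max x (SU P t)) \<le> B_phi P t (max y (SU P t))"
    "alpha P * U_rec P (Suc t) (max x (SU P t) + theta P)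
      \<le> alpha P * U_rec P (Suc t) (max y (SU P t) + theta P)"
    using B_phi_mono step.IH alpha_pos by (simp_all add: mult_left_mono)
  then show ?case
    using step.hyps by (subst (1 2) U_rec.simps) simp
qed

lemma sum_f_nidx_bounds:
  assumes t: "t < T P" and g: "\<And>m. m \<ge> -1 \<Longrightarrow> 0 \<le> g m \<and> g m \<le> M"
  shows "0 \<le> (\<Sum>m\<in>{-1..nidx P t y - 1}. g m * f P t m)
    \<and> (\<Sum>m\<in>{-1..nidx P t y - 1}. g m * f P t m) \<le> M * F P t (y + theta P - s P (Suc t))"
proof
  have M0: "0 \<le> M" using g[of "-1"] by simp
  have summand: "0 \<le> g m * f P t m \<and> g m * f P t m \<le> M * f P t m" if "m \<ge> -1" for m
    using g[OF that] f_nonneg[OF t, of m] by (simp add: mult_right_mono)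
  show "0 \<le> (\<Sum>m\<in>{-1..nidx P t y - 1}. g m * f P t m)"
    by (intro sum_nonneg) (use summand in auto)
  have "(\<Sum>m\<in>{-1..nidx P t y - 1}. g m * f P t m) \<le> M * (\<Sum>m\<in>{-1..nidx P t y - 1}. f P t m)"
    unfolding sum_distrib_left using summand by (intro sum_mono) simp
  also have "\<dots> \<le> M * F P t (z P (nidx P t y))"
    using sum_f_le_F M0 by (rule mult_left_mono)
  also have "\<dots> \<le> M * F P t (y + theta P - s P (Suc t))"
    using nidx_grid_cell[of t y] M0 F_mono[OF t]
    by (intro mult_left_mono) (simp_all add: z_minus_one)
  finally show "(\<Sum>m\<in>{-1..nidx P t y - 1}. g m * f P t m) \<le> M * F P t (y + theta P - s P (Suc t))" .
qed

lemma psi_step_bounds: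
  assumes t: "Suc t < T P" and y: "y \<in> range (z P)"
    and ph: "\<And>y. y \<in> range (z P) \<Longrightarrow>
      0 \<le> ph (theta P) y \<and> ph (theta P) y \<le> gam P (Suc t) * theta P + B_phi P (Suc t) y"
  shows "gam P t * theta P \<le> psi_step P t ph (theta P) y
    \<and> psi_step P t ph (theta P) y \<le> gam P t * theta P + B_phi P t y"
proof (cases "y < s P (Suc t) - theta P")
  case True
  then show ?thesis using B_phi_nonneg by (simp add: psi_step_def)
next
  case False
  define M where "M = gam P (Suc t) * theta P + B_phi P (Suc t) (y + theta P)"
  define Sum where "Sum = (\<Sum>m\<in>{-1..nidx P t y - 1}. ph (theta P) (y - z P m) * f P t m)"
  have "0 \<le> ph (theta P) (y - z P m) \<and> ph (theta P) (y - z P m) \<le> M" if "m \<ge> -1" for m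
  proof -
    have "y - z P m \<in> range (z P)" using y by (auto simp: z_diff)
    moreover have "y - z P m \<le> y + theta P" using z_mono[OF that] by (simp add: z_def)
    ultimately show ?thesis using ph B_phi_mono unfolding M_def by (smt (verit))
  qed
  then have "0 \<le> Sum \<and> Sum \<le> M * F P t (y + theta P - s P (Suc t))"
    unfolding Sum_def using t by (intro sum_f_nidx_bounds) simp_all
  then have "0 \<le> alpha P * Sum \<and> alpha P * Sum \<le> B_phi P t y"
    using alpha_pos by (simp add: B_phi_Suc[OF t] M_def mult_left_mono mult_ac)
  moreover have "psi_step P t ph (theta P) y = gam P t * theta P + alpha P * Sum"
    using False by (simp add: psi_step_def Sum_def)
  ultimately show ?thesis by simp
qed

lemma phiG_bounds:
  assumes "e \<in> {0, theta P}" "t \<le> T P - 1" "y \<in> range (z P)"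
  shows "0 \<le> phiG P e t (theta P) y \<and> phiG P e t (theta P) y \<le> gam P t * theta P + B_phi P t y"
  using assms(2,3)
proof (induction t arbitrary: y rule: inc_induct)
  case base
  have "phiG P e (T P - 1) (theta P) y = (if y < s P (T P - 1) then 0 else gam P (T P - 1) * theta P)"
    by (subst phiG.simps) simp
  then show ?case
    using gam_nonneg[of "T P - 1"] T_ge_2 theta_pos B_phi_nonneg[of "T P - 1" y] by simp
next
  case (step t)
  have St: "Suc t < T P" using step.hyps by simp
  have psi: "gam P t * theta P \<le> psi_step P t (phiG P e (Suc t)) (theta P) y
      \<and> psi_step P t (phiG P e (Suc t)) (theta P) y \<le> gam P t * theta P + B_phi P t y"
    using psi_step_bounds[OF St step.prems] step.IH by blast
  have phi_eq: "phiG P e t (theta P) y = (if y < s P t then 0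
      else if y - theta P < s P t then psi_step P t (phiG P e (Suc t)) (y - s P t + e) y
      else psi_step P t (phiG P e (Suc t)) (theta P) y)"
    using step.hyps by (subst phiG.simps) simp
  have g0: "0 \<le> gam P t * theta P" using gam_nonneg[of t] St theta_pos by simp
  consider "y < s P t" | "s P t \<le> y" "y - theta P < s P t" | "\<not> y - theta P < s P t"
    by linarith
  then show ?case
  proof cases
    case 1
    then show ?thesis using phi_eq g0 B_phi_nonneg by simp
  next
    case 2
    \<comment> \<open>both y and s_t lie on the grid, so y = s_t and the first argument becomes e\<close>
    obtain a b where "y = z P a" "s P t = z P b"
      using step.prems s_in_grid[OF step.hyps(2)] by auto
    with 2 have "y = s P t" using grid_eq_if_close[OF theta_pos] by force
    then show ?thesis
      using phi_eq 2 assms(1) psi g0 B_phi_nonneg by (auto simp: psi_step_def phiG_zero)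
  next
    case 3
    then show ?thesis using phi_eq psi g0 by auto
  qed
qed

lemma psi_theta_bounds:
  assumes "t < T P - 1" "y \<in> range (z P)"
  shows "gam P t * theta P \<le> psi P t (theta P) y \<and> psi P t (theta P) y \<le> gam P t * theta P + B_phi P t y"
proof -
  have "psi P t (theta P) y = psi_step P t (phiG P 0 (Suc t)) (theta P) y"
    using assms(1) by (simp add: psi_def phi_def)
  moreover have "Suc t < T P" using assms(1) by simp
  ultimately show ?thesis
    using psi_step_bounds[OF _ assms(2)] phiG_bounds[of 0 "Suc t"] assms(1) by simp
qed

lemma psibar_theta_bounds:
  assumes "t < T P - 1" "y \<in> range (z P)"
  shows "gam P t * theta P \<le> psibar P t (theta P) y \<and> psibar P t (theta P) y \<le> gam P t * theta P + B_phi P t y"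
proof -
  have "psibar P t (theta P) y = psi_step P t (phiG P (theta P) (Suc t)) (theta P) y"
    using assms(1) by (simp add: psibar_def phibar_def)
  moreover have "Suc t < T P" using assms(1) by simp
  ultimately show ?thesis
    using psi_step_bounds[OF _ assms(2)] phiG_bounds[of "theta P" "Suc t"] assms(1) by simp
qed

lemma omega_step_bounds:
  assumes t: "Suc t < T P" and x: "x \<in> range (z P)"
    and ob: "\<And>x. x \<in> range (z P) \<Longrightarrow> 0 \<le> ob x \<and> ob x \<le> U_rec P (Suc t) x"
  shows "0 \<le> omega_step P t ob x
    \<and> omega_step P t ob x \<le> B_phi P t x + alpha P * U_rec P (Suc t) (x + theta P)"
proof -
  have "0 \<le> ob (x - z P (int k - 1)) \<and> ob (x - z P (int k - 1)) \<le> U_rec P (Suc t) (x + theta P)" for k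
  proof -
    have "x - z P (int k - 1) \<in> range (z P)" using x by (auto simp: z_diff)
    moreover have "x - z P (int k - 1) \<le> x + theta P"
      using z_mono[of "-1" "int k - 1"] by (simp add: z_def)
    then have "U_rec P (Suc t) (x - z P (int k - 1)) \<le> U_rec P (Suc t) (x + theta P)"
      using U_rec_mono[of "Suc t"] t by simp
    ultimately show ?thesis using ob by fastforce
  qed
  then have "0 \<le> (\<Sum>k. ob (x - z P (int k - 1)) * f P t (int k - 1))
      \<and> (\<Sum>k. ob (x - z P (int k - 1)) * f P t (int k - 1)) \<le> U_rec P (Suc t) (x + theta P)"
    using t by (intro suminf_f_bounds) simp_all
  then have "0 \<le> alpha P * (\<Sum>k. ob (x - z P (int k - 1)) * f P t (int k - 1))
      \<and> alpha P * (\<Sum>k. ob (x - z P (int k - 1)) * f P t (int k - 1)) \<le> alpha P * U_rec P (Suc t) (x + theta P)"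
    using alpha_pos by (simp add: mult_left_mono)
  moreover have "gam P t * theta P \<le> psi P t (theta P) x
      \<and> psi P t (theta P) x \<le> gam P t * theta P + B_phi P t x"
    using psi_theta_bounds t x by simp
  ultimately show ?thesis
    unfolding omega_step_def by linarith
qed

lemma omegabar_bounds:
  assumes "t \<le> T P - 1" "x \<in> range (z P)"
  shows "0 \<le> omegabar P t x \<and> omegabar P t x \<le> U_rec P t x"
  using assms
proof (induction t arbitrary: x rule: inc_induct)
  case base
  then show ?case by (simp add: omegabar.simps U_rec.simps)
next
  case (step t)
  have St: "Suc t < T P" using step.hyps by simp
  define om where "om = omega_step P t (omegabar P (Suc t))"
  define et where "et = psibar P t (theta P) (SU P t) + om (SU P t)"
  have om: "0 \<le> om y \<and> om y \<le> B_phi P t y + alpha P * U_rec P (Suc t) (y + theta P)"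
    if "y \<in> range (z P)" for y
    unfolding om_def using omega_step_bounds[OF St that] step.IH by blast
  have SU: "SU P t \<in> range (z P)" by (simp add: SU_def)
  have g0: "0 \<le> gam P t * theta P" using gam_nonneg[of t] St theta_pos by simp
  then have et: "0 \<le> et \<and> et \<le> gam P t * theta P + B_phi P t (SU P t) + B_phi P t (SU P t)
      + alpha P * U_rec P (Suc t) (SU P t + theta P)"
    unfolding et_def using psibar_theta_bounds[OF step.hyps(2) SU] om[OF SU] by linarith
  have "omegabar P t x = (if x \<le> SU P t then et else max et (om x))"
    using step.hyps by (subst omegabar.simps) (simp add: et_def om_def Let_def)
  moreover have "U_rec P t x = gam P t * theta P + B_phi P t (SU P t) + B_phi P t (max x (SU P t))
      + alpha P * U_rec P (Suc t) (max x (SU P t) + theta P)"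
    using step.hyps by (subst U_rec.simps) simp
  moreover have "x > SU P t \<Longrightarrow> alpha P * U_rec P (Suc t) (SU P t + theta P)
      \<le> alpha P * U_rec P (Suc t) (x + theta P)"
    using U_rec_mono[of "Suc t"] St alpha_pos by (simp add: mult_left_mono)
  ultimately show ?case
    using et om[OF step.prems] B_phi_mono[of "SU P t" x t] B_phi_nonneg[of t "SU P t"] g0
    by (auto simp: max_def)
qed

lemma U_omega_le_Ubar_omega: "U_omega P t j \<le> Ubar_omega P t"
proof -
  define w where "w i n = alpha P ^ (n + i) * gam P (t + i + n)" for i n
  define p where "p i n = cdf_prod P (t + i) (SU P (t + i)) n
    + cdf_prod P (t + i) (max (mu P t j i) (SU P (t + i))) n" for i n
  have "w i n * p i n \<le> 2 * w i n" if "n \<in> {1..T P - 1 - t - i}" for i n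
  proof -
    from that have "t + i + n \<le> T P" "t + i + n < T P" by auto
    then have "0 \<le> w i n" "p i n \<le> 2"
      using alpha_pos gam_nonneg cdf_prod_bounds[of "t + i" n] unfolding w_def p_def
      by (simp, smt (verit))
    then show ?thesis by (metis mult.commute mult_left_mono)
  qed
  then have "theta P * (\<Sum>i=0..T P - 2 - t. \<Sum>n=1..T P - 1 - t - i. w i n * p i n)
      \<le> theta P * (\<Sum>i=0..T P - 2 - t. \<Sum>n=1..T P - 1 - t - i. 2 * w i n)"
    using theta_pos by (intro mult_left_mono sum_mono) auto
  also have "\<dots> = 2 * theta P * (\<Sum>i=0..T P - 2 - t. \<Sum>n=1..T P - 1 - t - i. w i n)"
    by (simp add: sum_distrib_left mult_ac)
  finally show ?thesis
    unfolding U_omega_eq_cdf_prod Ubar_omega_def w_def p_def by simp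
qed

end

theorem theorem4p3:
  fixes P :: inv_data
  assumes "standing_assms P"
  shows "\<forall>j::int. \<forall>t. t \<le> T P - 2 \<longrightarrow>
           omegabar P t (z P j) \<le> U_omega P t j \<and> U_omega P t j \<le> Ubar_omega P t"
proof (intro allI impI conjI)
  fix j :: int and t
  assume t: "t \<le> T P - 2"
  have T2: "2 \<le> T P" using T_ge_2[OF assms] .
  have "omegabar P t (z P j) \<le> U_rec P t (z P j)"
    using omegabar_bounds[OF assms, of t "z P j"] t by simp
  also have "\<dots> = U_omega P t j"
    by (simp add: U_rec_unfold[OF refl t T2] U_omega_eq_sum_U_term)
  finally show "omegabar P t (z P j) \<le> U_omega P t j" .
  show "U_omega P t j \<le> Ubar_omega P t" using U_omega_le_Ubar_omega[OF assms] .
qed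

end
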